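(* Let $h$ be a positive integer and $m=100h-1$. Write $(x_0X)^m=\sum_{i=0}^{m}a_iX^i$ in $A[X;D]$, where $a_i\in A(100h-1)$. Then there is an index $i>\frac34(m+1)$ such that $a_i\notin B_1$ and $a_j\in B_1$ for all $j>i$.
   Context: Let $K$ be a field and $A$ the free associative (non-unital) $K$-algebra on free generators $x_0,x_1,x_2,\dots$, with $K$-basis of monomials; $A^1$ is $A$ with unity adjoined. For $n\ge1$, $A(n)$ is the $K$-span of monomials of length $n$, and $A(0)=K$. For a monomial $s=x_{i_1}\cdots x_{i_n}$ write $s[q]=x_{i_q}$. Let $D$ be the derivation of $A$ with $D(x_i)=x_{i+1}$, and $A[X;D]$ the differential polynomial ring ($Xa=aX+D(a)$). $Z_1$ is the set of elements $a\in A$ of one of the forms: (1) $a=\kappa s$, $\kappa\in K$, $s$ a monomial of length $99$ with $s[3^p]=s[3^q]$ for some $0\le p<q\le 1$ (i.e. $s[1]=s[3]$); (2) $a=\kappa(s_1+s_2)$, $\kappa\in K$, $s_1,s_2$ monomials of length $99$, with integers $l_1>l_2\ge0$ such that $s_1[1]=x_{l_1}$, $s_1[3]=x_{l_2}$, $s_2[1]=x_{l_2}$, $s_2[3]=x_{l_1}$, and $s_1,s_2$ agree at all other positions. $B_1=\sum_{m\ge0}A(100m)\,Z_1\,A^1$ (the $K$-span of products $uzv$ with $u\in A(100m)$, $m\ge0$, $z\in Z_1$, $v\in A^1$). *)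

theory Defs
  imports Main "HOL-Library.Poly_Mapping"
begin

text \<open>Elements of the free associative algebra with unity A^1 over the field 'k on generators
x_0, x_1, ...: finitely supported K-linear combinations of words (monomials);
the word [i1,...,in] stands for x_i1 ... x_in, the empty word for the unit.\<close>
type_synonym 'k fa = "nat list \<Rightarrow>\<^sub>0 'k"

definition fa_mon :: "nat list \<Rightarrow> ('k::field) fa" where
  "fa_mon s = Poly_Mapping.single s 1"

definition fa_smult :: "'k::field \<Rightarrow> 'k fa \<Rightarrow> 'k fa" where
  "fa_smult c p = Poly_Mapping.map (\<lambda>v. c * v) p"

definition fa_mult :: "('k::field) fa \<Rightarrow> 'k fa \<Rightarrow> 'k fa" where
  "fa_mult p q = (\<Sum>s\<in>Poly_Mapping.keys p. \<Sum>t\<in>Poly_Mapping.keys q.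
      Poly_Mapping.single (s @ t) (Poly_Mapping.lookup p s * Poly_Mapping.lookup q t))"

definition fa_A :: "('k::field) fa set" where
  "fa_A = {p. [] \<notin> Poly_Mapping.keys p}"

definition fa_A1 :: "('k::field) fa set" where
  "fa_A1 = UNIV"

definition fa_hom :: "nat \<Rightarrow> ('k::field) fa set" where
  "fa_hom n = {p. \<forall>s\<in>Poly_Mapping.keys p. length s = n}"

text \<open>The derivation D with D(x_i) = x_(i+1), extended by Leibniz rule and linearity:
D(x_i1...x_in) = sum over positions q of the word with the q-th letter index raised by 1.\<close>
definition fa_D :: "('k::field) fa \<Rightarrow> 'k fa" where
  "fa_D p = (\<Sum>s\<in>Poly_Mapping.keys p. fa_smult (Poly_Mapping.lookup p s)
      (\<Sum>q<length s. fa_mon (s[q := Suc (s ! q)])))"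

text \<open>Differential polynomial ring A[X;D]: elements are finitely supported maps
i \<mapsto> coefficient of X^i (coefficients written on the left), with multiplication determined by
X^i b = sum_k (i choose k) D^k(b) X^(i-k), i.e. (a X^i)(b X^j) = sum_k (i choose k) a D^k(b) X^(i+j-k).\<close>
type_synonym 'k dpoly = "nat \<Rightarrow>\<^sub>0 'k fa"

definition dp_mult :: "('k::field) dpoly \<Rightarrow> 'k dpoly \<Rightarrow> 'k dpoly" where
  "dp_mult P Q = (\<Sum>i\<in>Poly_Mapping.keys P. \<Sum>j\<in>Poly_Mapping.keys Q. \<Sum>k\<in>{..i}.
      Poly_Mapping.single (i + j - k)
        (fa_smult (of_nat (i choose k)) (fa_mult (Poly_Mapping.lookup P i) ((fa_D ^^ k) (Poly_Mapping.lookup Q j)))))"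

definition x0X :: "('k::field) dpoly" where
  "x0X = Poly_Mapping.single 1 (fa_mon [0])"

definition x0X_pow :: "nat \<Rightarrow> ('k::field) dpoly" where
  "x0X_pow m = ((dp_mult x0X) ^^ (m - 1)) x0X"

definition x0X_coeff :: "nat \<Rightarrow> nat \<Rightarrow> ('k::field) fa" where
  "x0X_coeff m i = Poly_Mapping.lookup (x0X_pow m) i"

inductive_set fa_span :: "('k::field) fa set \<Rightarrow> 'k fa set" for S where
  span_zero: "0 \<in> fa_span S"
| span_base: "a \<in> S \<Longrightarrow> a \<in> fa_span S"
| span_add: "a \<in> fa_span S \<Longrightarrow> b \<in> fa_span S \<Longrightarrow> a + b \<in> fa_span S"
| span_smult: "a \<in> fa_span S \<Longrightarrow> fa_smult c a \<in> fa_span S"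

text \<open>Z_1. Positions s[q] are 1-based in the paper, s ! (q-1) here; the condition
s[3^p] = s[3^q] for 0 \<le> p < q \<le> 1 is s[1] = s[3], i.e. s!0 = s!2.\<close>
definition Z1 :: "('k::field) fa set" where
  "Z1 = {fa_smult \<kappa> (fa_mon s) | \<kappa> s. length s = 99 \<and>
            (\<exists>p q::nat. p < q \<and> q \<le> 1 \<and> s ! (3^p - 1) = s ! (3^q - 1))}
      \<union> {fa_smult \<kappa> (fa_mon s1 + fa_mon s2) | \<kappa> s1 s2. length s1 = 99 \<and> length s2 = 99 \<and>
            (\<exists>l1 l2::nat. l1 > l2 \<and> s1 ! 0 = l1 \<and> s1 ! 2 = l2 \<and> s2 ! 0 = l2 \<and> s2 ! 2 = l1 \<and>
               (\<forall>q<99. q \<noteq> 0 \<and> q \<noteq> 2 \<longrightarrow> s1 ! q = s2 ! q))}"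

definition B1 :: "('k::field) fa set" where
  "B1 = fa_span {fa_mult (fa_mult u z) v | u z v m. u \<in> fa_hom (100 * m) \<and> z \<in> Z1 \<and> v \<in> fa_A1}"

end

theory Submission
  imports Defs
begin

text \<open>Let m = 100h - 1. The coefficient of a monomial s in a_i is an explicit product of
binomial coefficients, nonzero only if the indices of the letters of s add up to m - i. Fix
b \<in> {1, 2} and, for S \<subseteq> {0, ..., h - 1}, let w_S be the monomial of length m whose k-th block of
100 letters has the letter x_b at offset 0 if k \<in> S and at offset 2 if k \<notin> S, and x_0
elsewhere. The linear functional p \<mapsto> \<Sum>_S (-1)^|S| p(w_S) kills every generator u z v of
B_1: since u has length divisible by 100, positions 1 and 3 of z are offsets 0 and 2 of a
block, so a monomial z of the first kind matches no w_S, while the two monomials of a z of the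
second kind differ by exchanging these two letters, which toggles k \<in> S and hence the sign.
On a_(m-bh) the functional factors over the blocks into
\<Prod>_k (C(100k + 2 - bk, b) - C(100k - bk, b)), which is 2^h for b = 1 and \<Prod>_k (196k + 1) for
b = 2. Taking b = 2 in characteristic 2 and b = 1 otherwise, the value is nonzero, so
a_(m-bh) \<notin> B_1; as m - bh \<ge> 98h - 1 > 3(m + 1)/4, the largest index of a coefficient outside
B_1 does the job.\<close>

section \<open>Linear functionals on the free algebra\<close>

definition fa_pair :: "(nat list \<Rightarrow> 'k) \<Rightarrow> 'k fa \<Rightarrow> 'k::field" where
  "fa_pair f p = (\<Sum>s\<in>Poly_Mapping.keys p. Poly_Mapping.lookup p s * f s)"

lemma fa_pair_superset:
  assumes "finite S" "Poly_Mapping.keys p \<subseteq> S"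
  shows "fa_pair f p = (\<Sum>s\<in>S. Poly_Mapping.lookup p s * f s)"
  unfolding fa_pair_def
  by (rule sum.mono_neutral_left) (use assms in \<open>auto simp: in_keys_iff\<close>)

lemma fa_pair_zero [simp]: "fa_pair f 0 = 0"
  by (simp add: fa_pair_def)

lemma fa_pair_add: "fa_pair f (p + q) = fa_pair f p + fa_pair f q"
proof -
  let ?S = "Poly_Mapping.keys p \<union> Poly_Mapping.keys q"
  have "fa_pair f (p + q) = (\<Sum>s\<in>?S. Poly_Mapping.lookup (p + q) s * f s)"
    by (rule fa_pair_superset) (auto simp: keys_add)
  also have "\<dots> = (\<Sum>s\<in>?S. Poly_Mapping.lookup p s * f s) + (\<Sum>s\<in>?S. Poly_Mapping.lookup q s * f s)"
    by (simp add: lookup_add distrib_right sum.distrib)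
  also have "\<dots> = fa_pair f p + fa_pair f q"
    using fa_pair_superset [of ?S p f] fa_pair_superset [of ?S q f] by simp
  finally show ?thesis .
qed

lemma lookup_fa_smult: "Poly_Mapping.lookup (fa_smult c p) s = c * Poly_Mapping.lookup p s"
  by (simp add: fa_smult_def Poly_Mapping.map.rep_eq when_def)

lemma fa_smult_one: "fa_smult 1 p = p"
  by (rule poly_mapping_eqI) (simp add: lookup_fa_smult)

lemma fa_pair_smult: "fa_pair f (fa_smult c p) = c * fa_pair f p"
proof -
  have "Poly_Mapping.keys (fa_smult c p) \<subseteq> Poly_Mapping.keys p"
    by (auto simp: in_keys_iff lookup_fa_smult)
  then have "fa_pair f (fa_smult c p) = (\<Sum>s\<in>Poly_Mapping.keys p. Poly_Mapping.lookup (fa_smult c p) s * f s)"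
    by (intro fa_pair_superset) auto
  then show ?thesis
    by (simp add: lookup_fa_smult fa_pair_def sum_distrib_left mult.assoc)
qed

lemma fa_pair_single: "fa_pair f (Poly_Mapping.single s c) = c * f s"
  by (simp add: fa_pair_def)

lemma fa_pair_mon: "fa_pair f (fa_mon s) = f s"
  by (simp add: fa_mon_def fa_pair_single)

lemma fa_pair_sum: "fa_pair f (sum g A) = (\<Sum>a\<in>A. fa_pair f (g a))"
  by (induction A rule: infinite_finite_induct) (auto simp: fa_pair_add)

lemma fa_pair_fun_add: "fa_pair (\<lambda>s. f s + g s) p = fa_pair f p + fa_pair g p"
  by (simp add: fa_pair_def distrib_left sum.distrib)

lemma fa_pair_mult: "fa_pair f (fa_mult p q) = fa_pair (\<lambda>s. fa_pair (\<lambda>t. f (s @ t)) q) p"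
  unfolding fa_mult_def fa_pair_sum fa_pair_single
  by (simp add: fa_pair_def sum_distrib_left mult.assoc)

lemma fa_pair_eq_0I: "(\<And>s. s \<in> Poly_Mapping.keys p \<Longrightarrow> f s = 0) \<Longrightarrow> fa_pair f p = 0"
  by (simp add: fa_pair_def)

lemma fa_pair_span_eq_0:
  assumes "\<And>x. x \<in> S \<Longrightarrow> fa_pair f x = 0" "p \<in> fa_span S"
  shows "fa_pair f p = 0"
  using assms(2) by induction (simp_all add: assms(1) fa_pair_add fa_pair_smult)

lemma fa_pair_delta:
  assumes "\<And>s. f s = (\<Sum>x\<in>X. if s = g x then c x else 0)" "finite X"
  shows "fa_pair f p = (\<Sum>x\<in>X. c x * Poly_Mapping.lookup p (g x))"
proof -
  have "fa_pair f p =
      (\<Sum>s\<in>Poly_Mapping.keys p. \<Sum>x\<in>X. if s = g x then c x * Poly_Mapping.lookup p s else 0)"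
    unfolding fa_pair_def assms(1) sum_distrib_left by (intro sum.cong refl) (simp add: mult.commute)
  also have "\<dots> = (\<Sum>x\<in>X. \<Sum>s\<in>Poly_Mapping.keys p. if s = g x then c x * Poly_Mapping.lookup p s else 0)"
    by (rule sum.swap)
  also have "\<dots> = (\<Sum>x\<in>X. c x * Poly_Mapping.lookup p (g x))"
    by (intro sum.cong refl) (simp add: sum.delta' in_keys_iff)
  finally show ?thesis .
qed

section \<open>The word coefficients\<close>

text \<open>\<open>word_coeff 0 w\<close> will be the coefficient of the word \<open>w\<close> in \<open>(x\<^sub>0X)\<^sup>n\<close>: scanning
\<open>w\<close> from the left, \<open>c\<close> counts the \<open>X\<close>'s to the left of the current letter that have not
been spent on differentiating earlier letters (each letter brings one new \<open>X\<close> to its right).\<close>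

fun word_coeff :: "nat \<Rightarrow> nat list \<Rightarrow> nat" where
  "word_coeff c [] = 1"
| "word_coeff c (x # w) = (c choose x) * word_coeff (c + 1 - x) w"

definition lower_at :: "nat list \<Rightarrow> nat \<Rightarrow> nat list" where
  "lower_at v q = v[q := v ! q - 1]"

definition word_coeff_lower_sum :: "nat \<Rightarrow> nat list \<Rightarrow> nat" where
  "word_coeff_lower_sum c v =
     (\<Sum>q<length v. if 0 < v ! q then word_coeff c (lower_at v q) else 0)"

lemma length_lower_at [simp]: "length (lower_at v q) = length v"
  by (simp add: lower_at_def)

lemma lower_at_Cons_0 [simp]: "lower_at (x # w) 0 = (x - 1) # w"
  and lower_at_Cons_Suc [simp]: "lower_at (x # w) (Suc q) = x # lower_at w q"
  by (simp_all add: lower_at_def)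

lemma sum_list_lower_at:
  "q < length v \<Longrightarrow> 0 < v ! q \<Longrightarrow> sum_list (lower_at v q) = sum_list v - 1"
  by (simp add: lower_at_def sum_list_update)

lemma word_coeff_lower_sum_Cons:
  "word_coeff_lower_sum c (x # w) =
     (if 0 < x then word_coeff c ((x - 1) # w) else 0) + (c choose x) * word_coeff_lower_sum (c + 1 - x) w"
proof -
  have "word_coeff_lower_sum c (x # w) = (if 0 < x then word_coeff c ((x - 1) # w) else 0) +
      (\<Sum>q<length w. if 0 < w ! q then word_coeff c (x # lower_at w q) else 0)"
    unfolding word_coeff_lower_sum_def length_Cons sum.lessThan_Suc_shift by (simp cong: if_cong)
  also have "(\<Sum>q<length w. if 0 < w ! q then word_coeff c (x # lower_at w q) else 0) =
      (c choose x) * word_coeff_lower_sum (c + 1 - x) w"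
    unfolding word_coeff_lower_sum_def sum_distrib_left by (rule sum.cong) auto
  finally show ?thesis .
qed

text \<open>The Pascal rule for words; it reflects \<open>X a = a X + D(a)\<close>.\<close>

lemma word_coeff_Suc: "word_coeff (Suc c) v = word_coeff c v + word_coeff_lower_sum c v"
proof (induction v arbitrary: c)
  case Nil
  then show ?case by (simp add: word_coeff_lower_sum_def)
next
  case (Cons x w)
  show ?case
  proof (cases x)
    case 0
    with Cons.IH [of "c + 1"] show ?thesis by (simp add: word_coeff_lower_sum_Cons algebra_simps)
  next
    case (Suc y)
    show ?thesis
    proof (cases "x \<le> c + 1")
      case True
      have "word_coeff (Suc c) (x # w) = ((c choose x) + (c choose y)) * word_coeff (c + 2 - x) w"
        using Suc by simp
      also have "\<dots> = (c choose x) * (word_coeff (c + 1 - x) w + word_coeff_lower_sum (c + 1 - x) w)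
          + (c choose y) * word_coeff (c + 1 - y) w"
        using Cons.IH [of "c + 1 - x"] True Suc by (simp add: Suc_diff_le algebra_simps)
      also have "\<dots> = word_coeff c (x # w) + word_coeff_lower_sum c (x # w)"
        using Suc by (simp add: word_coeff_lower_sum_Cons algebra_simps)
      finally show ?thesis .
    next
      case False
      with Suc show ?thesis by (simp add: word_coeff_lower_sum_Cons binomial_eq_0)
    qed
  qed
qed

lemma word_coeff_eq_0:
  assumes "v \<noteq> []" "c + length v \<le> sum_list v"
  shows "word_coeff c v = 0"
  using assms
proof (induction v arbitrary: c)
  case Nil
  then show ?case by simp
next
  case (Cons x w)
  show ?case
  proof (cases "x \<le> c \<and> w \<noteq> []")
    case True
    with Cons.prems have "word_coeff (c + 1 - x) w = 0" by (intro Cons.IH) auto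
    then show ?thesis by simp
  next
    case False
    with Cons.prems show ?thesis by (auto simp: binomial_eq_0)
  qed
qed

lemma word_coeff_prod:
  "word_coeff c w = (\<Prod>q<length w. (c + q - sum_list (take q w)) choose (w ! q))"
proof (induction w arbitrary: c)
  case Nil
  then show ?case by simp
next
  case (Cons x w)
  show ?case
  proof (cases "x \<le> c + 1")
    case True
    have "(\<Prod>q<length w. (c + 1 - x + q - sum_list (take q w)) choose (w ! q))
       = (\<Prod>q<length w. (c + Suc q - sum_list (take (Suc q) (x # w))) choose ((x # w) ! Suc q))"
      using True by (intro prod.cong) auto
    with Cons.IH show ?thesis
      by (simp only: word_coeff.simps length_Cons prod.lessThan_Suc_shift) simp
  next
    case False
    then show ?thesis by (simp only: length_Cons prod.lessThan_Suc_shift) simp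
  qed
qed

lemma fa_mult_zero_right [simp]: "fa_mult p 0 = 0"
  by (simp add: fa_mult_def)

lemma fa_D_zero [simp]: "fa_D 0 = 0"
  by (simp add: fa_D_def)

lemma raise_at_eq_iff:
  assumes "q < length s" "length s = length w"
  shows "s[q := Suc (s ! q)] = w \<longleftrightarrow> 0 < w ! q \<and> s = lower_at w q"
proof
  assume "s[q := Suc (s ! q)] = w"
  then show "0 < w ! q \<and> s = lower_at w q"
    using assms(1) by (auto simp: lower_at_def)
next
  assume "0 < w ! q \<and> s = lower_at w q"
  then show "s[q := Suc (s ! q)] = w"
    using assms by (auto simp: lower_at_def)
qed

lemma lookup_fa_D:
  "Poly_Mapping.lookup (fa_D p) w =
     (\<Sum>q<length w. if 0 < w ! q then Poly_Mapping.lookup p (lower_at w q) else 0)"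
proof -
  let ?K = "Poly_Mapping.keys p"
  let ?l = "Poly_Mapping.lookup p"
  have "Poly_Mapping.lookup (fa_D p) w =
      (\<Sum>s\<in>?K. \<Sum>q<length s. if s[q := Suc (s ! q)] = w then ?l s else 0)"
    unfolding fa_D_def lookup_sum lookup_fa_smult fa_mon_def lookup_single
    by (auto simp: sum_distrib_left when_def intro!: sum.cong)
  also have "\<dots> = (\<Sum>s\<in>?K. \<Sum>q<length w. if 0 < w ! q \<and> s = lower_at w q then ?l s else 0)"
  proof (rule sum.cong [OF refl])
    fix s
    show "(\<Sum>q<length s. if s[q := Suc (s ! q)] = w then ?l s else 0) =
          (\<Sum>q<length w. if 0 < w ! q \<and> s = lower_at w q then ?l s else 0)"
    proof (cases "length s = length w")
      case True
      then show ?thesis by (intro sum.cong) (simp_all add: raise_at_eq_iff)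
    next
      case False
      then have "s[q := Suc (s ! q)] \<noteq> w" "s \<noteq> lower_at w q" for q
        by (metis length_list_update length_lower_at)+
      then show ?thesis by simp
    qed
  qed
  also have "\<dots> = (\<Sum>q<length w. \<Sum>s\<in>?K. if 0 < w ! q \<and> s = lower_at w q then ?l s else 0)"
    by (rule sum.swap)
  also have "\<dots> = (\<Sum>q<length w. if 0 < w ! q then ?l (lower_at w q) else 0)"
    by (intro sum.cong refl) (simp add: sum.delta' in_keys_iff)
  finally show ?thesis .
qed

lemma lookup_fa_mult_letter:
  "Poly_Mapping.lookup (fa_mult (fa_mon [x]) p) w =
     (case w of [] \<Rightarrow> 0 | y # v \<Rightarrow> if y = x then Poly_Mapping.lookup p v else 0)"
proof -
  have "Poly_Mapping.lookup (fa_mult (fa_mon [x]) p) w =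
      (\<Sum>t\<in>Poly_Mapping.keys p. if x # t = w then Poly_Mapping.lookup p t else 0)"
    unfolding fa_mult_def fa_mon_def lookup_sum by (simp add: lookup_single when_def)
  then show ?thesis
    by (cases w) (auto simp: sum.delta' in_keys_iff)
qed

lemma lookup_dp_mult_single_1:
  assumes "a \<noteq> 0"
  shows "Poly_Mapping.lookup (dp_mult (Poly_Mapping.single 1 a) Q) i =
    (if i = 0 then 0 else fa_mult a (Poly_Mapping.lookup Q (i - 1)))
      + fa_mult a (fa_D (Poly_Mapping.lookup Q i))"
proof -
  let ?K = "Poly_Mapping.keys Q"
  let ?l = "Poly_Mapping.lookup Q"
  have "{..1::nat} = {0, 1}" by auto
  then have "Poly_Mapping.lookup (dp_mult (Poly_Mapping.single 1 a) Q) i =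
      (\<Sum>j\<in>?K. if Suc j = i then fa_mult a (?l j) else 0)
      + (\<Sum>j\<in>?K. if j = i then fa_mult a (fa_D (?l j)) else 0)"
    using assms
    by (simp add: dp_mult_def lookup_sum lookup_add lookup_single when_def sum.distrib fa_smult_one
        cong: if_cong)
  also have "(\<Sum>j\<in>?K. if Suc j = i then fa_mult a (?l j) else 0) =
      (if i = 0 then 0 else fa_mult a (?l (i - 1)))"
    by (cases i) (auto simp: sum.delta' in_keys_iff)
  also have "(\<Sum>j\<in>?K. if j = i then fa_mult a (fa_D (?l j)) else 0) = fa_mult a (fa_D (?l i))"
    by (simp add: sum.delta' in_keys_iff)
  finally show ?thesis .
qed

text \<open>Each of the \<open>n\<close> factors \<open>X\<close> either survives or differentiates a letter, hence the
condition \<open>sum_list w + i = n\<close>.\<close>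

definition x0X_word_coeff :: "nat \<Rightarrow> nat \<Rightarrow> nat list \<Rightarrow> 'k::field" where
  "x0X_word_coeff n i w =
     (if length w = n \<and> sum_list w + i = n then of_nat (word_coeff 0 w) else 0)"

lemma fa_mon_neq_zero: "fa_mon s \<noteq> (0 :: 'k::field fa)"
  by (metis fa_mon_def lookup_single_eq lookup_zero one_neq_zero)

lemma x0X_pow_Suc: "1 \<le> n \<Longrightarrow> x0X_pow (Suc n) = dp_mult x0X (x0X_pow n)"
  unfolding x0X_pow_def by (cases n) auto

lemma x0X_word_coeff_Suc:
  "(if i = 0 then 0 else x0X_word_coeff n (i - 1) v) +
     (\<Sum>q<length v. if 0 < v ! q then x0X_word_coeff n i (lower_at v q) else 0) =
   (x0X_word_coeff (Suc n) i (0 # v) :: 'k::field)"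
proof (cases "length v = n \<and> sum_list v + i = Suc n")
  case True
  have lower_sum: "(\<Sum>q<length v. if 0 < v ! q then x0X_word_coeff n i (lower_at v q) else 0) =
      (of_nat (word_coeff_lower_sum 0 v) :: 'k)"
    unfolding word_coeff_lower_sum_def of_nat_sum
  proof (intro sum.cong refl)
    fix q
    assume "q \<in> {..<length v}"
    then show "(if 0 < v ! q then x0X_word_coeff n i (lower_at v q) else 0) =
        of_nat (if 0 < v ! q then word_coeff 0 (lower_at v q) else 0)"
      using True elem_le_sum_list [of q v] by (auto simp: x0X_word_coeff_def sum_list_lower_at)
  qed
  have "word_coeff 0 (0 # v) = word_coeff 0 v + word_coeff_lower_sum 0 v"
    using word_coeff_Suc [of 0 v] by simp
  moreover have "word_coeff 0 v = 0" if "i = 0"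
    using True that by (intro word_coeff_eq_0) auto
  ultimately show ?thesis
    using True lower_sum by (auto simp: x0X_word_coeff_def)
next
  case False
  have "q < length v \<Longrightarrow> 0 < v ! q \<Longrightarrow> x0X_word_coeff n i (lower_at v q) = (0 :: 'k)" for q
    using False elem_le_sum_list [of q v] by (auto simp: x0X_word_coeff_def sum_list_lower_at)
  then have "(\<Sum>q<length v. if 0 < v ! q then x0X_word_coeff n i (lower_at v q) else 0) = (0 :: 'k)"
    by (intro sum.neutral) auto
  moreover have "(if i = 0 then 0 else x0X_word_coeff n (i - 1) v) = (0 :: 'k)"
    using False by (auto simp: x0X_word_coeff_def)
  ultimately show ?thesis
    using False by (auto simp: x0X_word_coeff_def)
qed

lemma lookup_x0X_coeff:
  assumes "1 \<le> n"
  shows "Poly_Mapping.lookup (x0X_coeff n i) w = (x0X_word_coeff n i w :: 'k::field)"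
  using assms
proof (induction n arbitrary: i w rule: nat_induct_at_least)
  case base
  show ?case
    by (cases w) (auto simp: x0X_pow_def x0X_coeff_def x0X_def fa_mon_def lookup_single when_def
        x0X_word_coeff_def binomial_eq_0)
next
  case (Suc n)
  have "Poly_Mapping.lookup (x0X_coeff (Suc n) i) w =
      Poly_Mapping.lookup ((if i = 0 then 0 else fa_mult (fa_mon [0]) (x0X_coeff n (i - 1)))
        + fa_mult (fa_mon [0]) (fa_D (x0X_coeff n i))) w"
    unfolding x0X_coeff_def x0X_pow_Suc [OF Suc.hyps] x0X_def
    by (simp only: lookup_dp_mult_single_1 [OF fa_mon_neq_zero])
  also have "\<dots> = (x0X_word_coeff (Suc n) i w :: 'k)"
  proof (cases w)
    case Nil
    then show ?thesis by (simp add: lookup_add lookup_fa_mult_letter x0X_word_coeff_def)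
  next
    case (Cons x v)
    show ?thesis
    proof (cases "x = 0")
      case True
      then show ?thesis
        using Cons x0X_word_coeff_Suc [of i n v]
        by (cases "i = 0") (simp_all add: lookup_add lookup_fa_mult_letter lookup_fa_D Suc.IH cong: if_cong)
    next
      case False
      then show ?thesis
        using Cons by (simp add: lookup_add lookup_fa_mult_letter x0X_word_coeff_def binomial_eq_0)
    qed
  qed
  finally show ?case .
qed

section \<open>The test words\<close>

definition test_letter :: "nat \<Rightarrow> nat set \<Rightarrow> nat \<Rightarrow> nat" where
  "test_letter b S q =
     (if q mod 100 = 0 \<and> q div 100 \<in> S \<or> q mod 100 = 2 \<and> q div 100 \<notin> S then b else 0)"

definition test_word :: "nat \<Rightarrow> nat \<Rightarrow> nat set \<Rightarrow> nat list" where
  "test_word b m S = map (test_letter b S) [0..<m]"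

lemma length_test_word [simp]: "length (test_word b m S) = m"
  by (simp add: test_word_def)

lemma nth_test_word: "q < m \<Longrightarrow> test_word b m S ! q = test_letter b S q"
  by (simp add: test_word_def)

lemma test_letter_block:
  "j < 100 \<Longrightarrow> test_letter b S (100 * k + j) =
     (if j = 0 \<and> k \<in> S \<or> j = 2 \<and> k \<notin> S then b else 0)"
  by (simp add: test_letter_def)

lemma test_letter_0: "test_letter b S (100 * k) = (if k \<in> S then b else 0)"
  and test_letter_1: "test_letter b S (Suc (100 * k)) = 0"
  and test_letter_2: "test_letter b S (Suc (Suc (100 * k))) = (if k \<in> S then 0 else b)"
  using test_letter_block [of 0 b S k] test_letter_block [of 1 b S k] test_letter_block [of 2 b S k]
  by auto

lemma test_letter_last: "0 < h \<Longrightarrow> test_letter b S (100 * h - 1) = 0"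
  using test_letter_block [of 99 b S "h - 1"] by (simp add: algebra_simps)

lemma sum_test_letter_block: "(\<Sum>j<100. test_letter b S (100 * k + j)) = b"
proof -
  have "(\<Sum>j<100. test_letter b S (100 * k + j)) =
      (\<Sum>j<100::nat. (if j = 0 then (if k \<in> S then b else 0) else 0)
        + (if j = 2 then (if k \<in> S then 0 else b) else 0))"
    by (intro sum.cong refl) (auto simp: test_letter_block)
  then show ?thesis
    by (simp add: sum.distrib)
qed

lemma sum_blocks: "(\<Sum>q<k * 100. f q) = (\<Sum>i<k. \<Sum>j<100. f (100 * i + j))"
  for f :: "nat \<Rightarrow> 'a::comm_monoid_add"
proof -
  have "sum f {i * 100..<i * 100 + 100} = (\<Sum>j<100. f (100 * i + j))" for i
    using sum.shift_bounds_nat_ivl [of f 0 "i * 100" 100]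
    by (simp add: atLeast0LessThan algebra_simps)
  then show ?thesis
    by (simp add: sum.nat_group [symmetric])
qed

lemma prod_blocks: "(\<Prod>q<k * 100. f q) = (\<Prod>i<k. \<Prod>j<100. f (100 * i + j))"
  for f :: "nat \<Rightarrow> 'a::comm_monoid_mult"
proof -
  have "prod f {i * 100..<i * 100 + 100} = (\<Prod>j<100. f (100 * i + j))" for i
    using prod.shift_bounds_nat_ivl [of f 0 "i * 100" 100]
    by (simp add: atLeast0LessThan algebra_simps)
  then show ?thesis
    by (simp add: prod.nat_group [symmetric])
qed

lemma sum_list_test_word: "sum_list (test_word b q S) = (\<Sum>r<q. test_letter b S r)"
  by (simp add: test_word_def interv_sum_list_conv_sum_set_nat atLeast0LessThan)

lemma take_test_word: "q \<le> m \<Longrightarrow> take q (test_word b m S) = test_word b q S"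
  by (simp add: test_word_def take_map)

lemma sum_test_letter_blocks: "(\<Sum>r<100 * k. test_letter b S r) = b * k"
  using sum_blocks [where f = "test_letter b S" and k = k]
  by (simp only: mult.commute [of 100 k] sum_test_letter_block) simp

lemma sum_list_test_word_full:
  assumes "0 < h"
  shows "sum_list (test_word b (100 * h - 1) S) = b * h"
proof -
  define m where "m = 100 * h - 1"
  have "100 * h = Suc m"
    using assms by (simp add: m_def)
  then have "(\<Sum>r<100 * h. test_letter b S r) = (\<Sum>r<Suc m. test_letter b S r)"
    by (simp only:)
  also have "\<dots> = (\<Sum>r<m. test_letter b S r)"
    using test_letter_last [OF assms, of b S] unfolding m_def [symmetric] by simp
  finally show ?thesis
    unfolding m_def [symmetric] by (simp add: sum_list_test_word sum_test_letter_blocks)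
qed

definition block_binom :: "nat \<Rightarrow> nat \<Rightarrow> nat \<Rightarrow> nat" where
  "block_binom b k c = (100 * k + c - b * k) choose b"

abbreviation test_factor :: "nat \<Rightarrow> nat set \<Rightarrow> nat \<Rightarrow> nat" where
  "test_factor b S q \<equiv> (q - sum_list (test_word b q S)) choose test_letter b S q"

lemma prod_test_factor_block:
  "(\<Prod>j<100. test_factor b S (100 * k + j)) =
     (if k \<in> S then block_binom b k 0 else block_binom b k 2)"
proof -
  have "test_factor b S (100 * k + j) = 1" if "j < 100" "j \<noteq> 0" "j \<noteq> 2" for j
    using that by (simp only: test_letter_block) simp
  then have "(\<Prod>j<100. test_factor b S (100 * k + j)) = (\<Prod>j\<in>{0, 2}. test_factor b S (100 * k + j))"
    by (intro prod.mono_neutral_right) auto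
  also have "\<dots> = test_factor b S (100 * k) * test_factor b S (100 * k + 2)"
    by simp
  also have "sum_list (test_word b (100 * k) S) = b * k"
    by (simp only: sum_list_test_word sum_test_letter_blocks)
  also have "sum_list (test_word b (100 * k + 2) S) = b * k + test_letter b S (100 * k)"
    by (simp add: sum_list_test_word numeral_2_eq_2 sum_test_letter_blocks test_letter_1)
  finally show ?thesis
    by (simp add: test_letter_0 test_letter_2 block_binom_def)
qed

lemma word_coeff_test_word:
  assumes "0 < h"
  shows "word_coeff 0 (test_word b (100 * h - 1) S) =
    (\<Prod>k<h. if k \<in> S then block_binom b k 0 else block_binom b k 2)"
proof -
  define m where "m = 100 * h - 1"
  have "word_coeff 0 (test_word b m S) = (\<Prod>q<m. test_factor b S q)"
    unfolding word_coeff_prod by (intro prod.cong refl) (auto simp: take_test_word nth_test_word)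
  also have "\<dots> = (\<Prod>q<Suc m. test_factor b S q)"
    using test_letter_last [OF assms, of b S] unfolding m_def [symmetric] by simp
  also have "Suc m = h * 100"
    using assms by (simp add: m_def)
  also have "(\<Prod>q<h * 100. test_factor b S q) =
      (\<Prod>k<h. if k \<in> S then block_binom b k 0 else block_binom b k 2)"
    by (simp only: prod_blocks prod_test_factor_block)
  finally show ?thesis
    unfolding m_def .
qed

section \<open>The test functional\<close>

definition test_fun :: "nat \<Rightarrow> nat \<Rightarrow> nat list \<Rightarrow> 'k::field" where
  "test_fun b h w =
     (\<Sum>S\<in>Pow {..<h}. if w = test_word b (100 * h - 1) S then (-1) ^ card S else 0)"

definition swap_block :: "nat \<Rightarrow> nat list \<Rightarrow> nat list" where
  "swap_block k w = w[100 * k := w ! (100 * k + 2), 100 * k + 2 := w ! (100 * k)]"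

definition toggle :: "nat \<Rightarrow> nat set \<Rightarrow> nat set" where
  "toggle k S = (if k \<in> S then S - {k} else insert k S)"

lemma length_swap_block [simp]: "length (swap_block k w) = length w"
  by (simp add: swap_block_def)

lemma swap_block_swap_block: "100 * k + 2 < length w \<Longrightarrow> swap_block k (swap_block k w) = w"
  unfolding swap_block_def by (rule nth_equalityI) (auto simp: nth_list_update)

lemma swap_block_eqI:
  assumes "length u = length v" "100 * k + 2 < length u"
    "u ! (100 * k) = v ! (100 * k + 2)" "u ! (100 * k + 2) = v ! (100 * k)"
    "\<And>q. q < length u \<Longrightarrow> q \<noteq> 100 * k \<Longrightarrow> q \<noteq> 100 * k + 2 \<Longrightarrow> u ! q = v ! q"
  shows "swap_block k u = v"
  unfolding swap_block_def using assms by (intro nth_equalityI) (auto simp: nth_list_update)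

lemma toggle_toggle [simp]: "toggle k (toggle k S) = S"
  by (auto simp: toggle_def)

lemma toggle_subset: "k < h \<Longrightarrow> S \<subseteq> {..<h} \<Longrightarrow> toggle k S \<subseteq> {..<h}"
  by (auto simp: toggle_def)

lemma power_card_toggle:
  assumes "finite S"
  shows "(-1 :: 'a::ring_1) ^ card (toggle k S) = - ((-1) ^ card S)"
proof (cases "k \<in> S")
  case True
  then have "card S = Suc (card (S - {k}))"
    using assms by (simp only: card_Suc_Diff1)
  with True show ?thesis
    by (simp add: toggle_def del: card_Diff_insert)
next
  case False
  with assms show ?thesis
    by (simp add: toggle_def)
qed

lemma test_letter_toggle:
  "test_letter b (toggle k S) q =
     (if q = 100 * k then test_letter b S (100 * k + 2)
      else if q = 100 * k + 2 then test_letter b S (100 * k) else test_letter b S q)"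
proof (cases "q div 100 = k")
  case True
  then obtain j where q: "q = 100 * k + j" "j < 100"
    by (metis div_mult_mod_eq mult.commute add.commute mod_less_divisor zero_less_numeral)
  show ?thesis
    unfolding q using q(2) by (auto simp: test_letter_block test_letter_0 test_letter_2 toggle_def)
next
  case False
  then have "q \<noteq> 100 * k" "q \<noteq> 100 * k + 2" "q div 100 \<in> toggle k S \<longleftrightarrow> q div 100 \<in> S"
    by (auto simp: toggle_def)
  then show ?thesis
    by (simp add: test_letter_def)
qed

lemma swap_block_test_word:
  "100 * k + 2 < m \<Longrightarrow> swap_block k (test_word b m S) = test_word b m (toggle k S)"
  by (rule swap_block_eqI) (auto simp: nth_test_word test_letter_toggle)

lemma test_fun_eq_0_of_length: "length w \<noteq> 100 * h - 1 \<Longrightarrow> test_fun b h w = 0"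
  unfolding test_fun_def by (intro sum.neutral) auto

lemma test_fun_swap_block:
  assumes "100 * k + 2 < length u"
  shows "test_fun b h u + test_fun b h (swap_block k u) = (0 :: 'k::field)"
proof (cases "length u = 100 * h - 1")
  case False
  then show ?thesis
    by (simp add: test_fun_eq_0_of_length)
next
  case True
  let ?m = "100 * h - 1"
  have kh: "k < h"
    using assms True by simp
  have swap_eq_iff: "swap_block k u = test_word b ?m (toggle k S) \<longleftrightarrow> u = test_word b ?m S" for S
    using assms True swap_block_swap_block [of k u] swap_block_test_word [of k ?m b]
    by (metis length_test_word toggle_toggle)
  have "test_fun b h (swap_block k u) =
      (\<Sum>S\<in>Pow {..<h}. if swap_block k u = test_word b ?m (toggle k S)
        then (-1) ^ card (toggle k S) else (0 :: 'k))"
    unfolding test_fun_def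
    by (rule sum.reindex_bij_witness [where i = "toggle k" and j = "toggle k"])
      (auto simp: toggle_subset [OF kh])
  also have "\<dots> = (\<Sum>S\<in>Pow {..<h}. - (if u = test_word b ?m S then (-1) ^ card S else 0))"
    unfolding swap_eq_iff by (intro sum.cong refl) (auto simp: power_card_toggle finite_subset)
  also have "\<dots> = - test_fun b h u"
    by (simp add: test_fun_def sum_negf)
  finally show ?thesis
    by simp
qed

lemma test_fun_repeated_letter:
  assumes "0 < b" "length a = 100 * k" "length s = 99" "s ! 0 = s ! 2"
  shows "test_fun b h (a @ s @ t) = (0 :: 'k::field)"
proof -
  have "a @ s @ t \<noteq> test_word b (100 * h - 1) S" for S
  proof
    assume word: "a @ s @ t = test_word b (100 * h - 1) S"
    then have "length (a @ s @ t) = 100 * h - 1"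
      by simp
    then have "100 * k + 2 < 100 * h - 1"
      using assms by simp
    moreover have "(a @ s @ t) ! (100 * k) = (a @ s @ t) ! (100 * k + 2)"
      using assms by (simp add: nth_append)
    ultimately have "test_letter b S (100 * k) = test_letter b S (100 * k + 2)"
      by (simp add: word nth_test_word)
    with assms(1) show False
      by (simp add: test_letter_0 test_letter_2 split: if_splits)
  qed
  then show ?thesis
    unfolding test_fun_def by (intro sum.neutral) auto
qed

lemma test_fun_swapped_letters:
  assumes "length a = 100 * k" "length s1 = 99" "length s2 = 99"
    "s1 ! 0 = s2 ! 2" "s1 ! 2 = s2 ! 0" "\<forall>q<99. q \<noteq> 0 \<and> q \<noteq> 2 \<longrightarrow> s1 ! q = s2 ! q"
  shows "test_fun b h (a @ s1 @ t) + test_fun b h (a @ s2 @ t) = (0 :: 'k::field)"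
proof -
  have "swap_block k (a @ s1 @ t) = a @ s2 @ t"
  proof (rule swap_block_eqI)
    fix q
    assume "q < length (a @ s1 @ t)" "q \<noteq> 100 * k" "q \<noteq> 100 * k + 2"
    then show "(a @ s1 @ t) ! q = (a @ s2 @ t) ! q"
      using assms(1-3) assms(6) [rule_format, of "q - 100 * k"] by (auto simp: nth_append)
  qed (use assms in \<open>auto simp: nth_append\<close>)
  moreover have "100 * k + 2 < length (a @ s1 @ t)"
    using assms by simp
  ultimately show ?thesis
    using test_fun_swap_block by metis
qed

lemma fa_pair_test_fun_generator:
  assumes "0 < b" "u \<in> fa_hom (100 * n)" "z \<in> Z1"
  shows "fa_pair (test_fun b h) (fa_mult (fa_mult u z) v) = (0 :: 'k::field)"
  unfolding fa_pair_mult append_assoc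
proof (rule fa_pair_eq_0I)
  fix a
  assume "a \<in> Poly_Mapping.keys u"
  then have a: "length a = 100 * n"
    using assms(2) by (auto simp: fa_hom_def)
  show "fa_pair (\<lambda>s. fa_pair (\<lambda>t. test_fun b h (a @ s @ t)) v) z = 0"
    using assms(3) unfolding Z1_def
  proof (elim UnE CollectE exE conjE)
    fix \<kappa> s p q
    assume z: "z = fa_smult \<kappa> (fa_mon s)" and s: "length s = 99" and "p < q" "q \<le> 1"
      and repeated: "s ! (3 ^ p - 1) = s ! (3 ^ q - 1)"
    then have "p = 0" "q = 1"
      by auto
    with repeated have "s ! 0 = s ! 2"
      by simp
    then have "fa_pair (\<lambda>t. test_fun b h (a @ s @ t)) v = 0"
      by (intro fa_pair_eq_0I test_fun_repeated_letter [OF assms(1) a s])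
    then show ?thesis
      by (simp add: z fa_pair_smult fa_pair_mon)
  next
    fix \<kappa> s1 s2 l1 l2
    assume z: "z = fa_smult \<kappa> (fa_mon s1 + fa_mon s2)"
      and "length s1 = 99" "length s2 = 99" "s1 ! 0 = l1" "s1 ! 2 = l2" "s2 ! 0 = l2" "s2 ! 2 = l1"
      "\<forall>q<99. q \<noteq> 0 \<and> q \<noteq> 2 \<longrightarrow> s1 ! q = s2 ! q"
    then have "fa_pair (\<lambda>t. test_fun b h (a @ s1 @ t) + test_fun b h (a @ s2 @ t)) v = 0"
      by (intro fa_pair_eq_0I test_fun_swapped_letters [OF a]) simp_all
    then show ?thesis
      by (simp add: z fa_pair_smult fa_pair_mon fa_pair_add fa_pair_fun_add)
  qed
qed

lemma fa_pair_test_fun_B1: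
  "0 < b \<Longrightarrow> p \<in> B1 \<Longrightarrow> fa_pair (test_fun b h) p = (0 :: 'k::field)"
  unfolding B1_def by (rule fa_pair_span_eq_0) (auto simp: fa_pair_test_fun_generator)

lemma fa_pair_test_fun:
  "fa_pair (test_fun b h) p =
     (\<Sum>S\<in>Pow {..<h}. (-1) ^ card S * Poly_Mapping.lookup p (test_word b (100 * h - 1) S) :: 'k::field)"
  by (rule fa_pair_delta) (simp_all add: test_fun_def)

lemma fa_pair_test_fun_x0X_coeff:
  assumes "0 < h" "b * h \<le> 100 * h - 1"
  shows "fa_pair (test_fun b h) (x0X_coeff (100 * h - 1) (100 * h - 1 - b * h)) =
    (\<Prod>k<h. of_nat (block_binom b k 2) - of_nat (block_binom b k 0) :: 'k::field)"
proof -
  let ?m = "100 * h - 1"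
  let ?A = "\<lambda>k. of_nat (block_binom b k 0) :: 'k"
  let ?B = "\<lambda>k. of_nat (block_binom b k 2) :: 'k"
  have m: "1 \<le> ?m"
    using assms(1) by simp
  have "Poly_Mapping.lookup (x0X_coeff ?m (?m - b * h)) (test_word b ?m S) =
      (\<Prod>k<h. if k \<in> S then ?A k else ?B k)" for S
  proof -
    have "Poly_Mapping.lookup (x0X_coeff ?m (?m - b * h)) (test_word b ?m S) =
        of_nat (word_coeff 0 (test_word b ?m S))"
      using assms unfolding lookup_x0X_coeff [OF m] x0X_word_coeff_def sum_list_test_word_full [OF assms(1)]
      by simp
    then show ?thesis
      unfolding word_coeff_test_word [OF assms(1)] by (simp add: of_nat_prod if_distrib)
  qed
  moreover have "(-1) ^ card S * (\<Prod>k<h. if k \<in> S then ?A k else ?B k) =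
      (\<Prod>k\<in>S. - ?A k) * (\<Prod>k\<in>{..<h} - S. ?B k)" if "S \<subseteq> {..<h}" for S
  proof -
    have "(\<Prod>k<h. if k \<in> S then ?A k else ?B k) = (\<Prod>k\<in>S. ?A k) * (\<Prod>k\<in>{..<h} - S. ?B k)"
      using that by (simp add: prod.If_cases Int_absorb1 Diff_eq)
    moreover have "(\<Prod>k\<in>S. - ?A k) = (-1) ^ card S * (\<Prod>k\<in>S. ?A k)"
      using prod.distrib [of "\<lambda>_. -1" ?A S] by simp
    ultimately show ?thesis
      by (simp add: mult.assoc)
  qed
  ultimately have "fa_pair (test_fun b h) (x0X_coeff ?m (?m - b * h)) =
      (\<Sum>S\<in>Pow {..<h}. (\<Prod>k\<in>S. - ?A k) * (\<Prod>k\<in>{..<h} - S. ?B k))"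
    by (simp add: fa_pair_test_fun)
  also have "\<dots> = (\<Prod>k<h. ?B k - ?A k)"
    by (simp add: prod_add [symmetric])
  finally show ?thesis .
qed

lemma block_binom_1: "block_binom 1 k 2 = block_binom 1 k 0 + 2"
  by (simp add: block_binom_def)

lemma block_binom_2: "block_binom 2 k 2 = block_binom 2 k 0 + 2 * (98 * k) + 1"
proof -
  have "100 * k + 2 - 2 * k = Suc (Suc (98 * k))" "100 * k - 2 * k = 98 * k"
    by simp_all
  then show ?thesis
    by (simp add: block_binom_def numeral_2_eq_2)
qed

lemma x0X_coeff_notin_B1:
  assumes "0 < h"
  shows "\<exists>b \<le> 2. (x0X_coeff (100 * h - 1) (100 * h - 1 - b * h) :: 'k::field fa) \<notin> B1"
proof -
  define b :: nat where "b = (if (2 :: 'k) = 0 then 2 else 1)"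
  have b: "0 < b" "b \<le> 2"
    by (simp_all add: b_def)
  have "b * h \<le> 2 * h"
    using b(2) by (rule mult_le_mono1)
  then have "b * h \<le> 100 * h - 1"
    using assms by linarith
  then have "fa_pair (test_fun b h) (x0X_coeff (100 * h - 1) (100 * h - 1 - b * h)) =
      (\<Prod>k<h. of_nat (block_binom b k 2) - of_nat (block_binom b k 0) :: 'k)"
    by (rule fa_pair_test_fun_x0X_coeff [OF assms])
  also have "\<dots> \<noteq> 0"
  proof (cases "(2 :: 'k) = 0")
    case True
    then have "b = 2"
      by (simp add: b_def)
    have "of_nat (block_binom 2 k 2) - of_nat (block_binom 2 k 0) = (1 :: 'k)" for k
    proof -
      have "of_nat (block_binom 2 k 2) - of_nat (block_binom 2 k 0) = (2 * of_nat (98 * k) + 1 :: 'k)"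
        unfolding block_binom_2 by simp
      also have "\<dots> = 1"
        by (simp only: True mult_zero_left add_0)
      finally show ?thesis .
    qed
    then show ?thesis
      unfolding \<open>b = 2\<close> by simp
  next
    case False
    then have "b = 1"
      by (simp add: b_def)
    have "of_nat (block_binom 1 k 2) - of_nat (block_binom 1 k 0) = (2 :: 'k)" for k
      unfolding block_binom_1 by simp
    with False show ?thesis
      unfolding \<open>b = 1\<close> by simp
  qed
  finally show ?thesis
    using b fa_pair_test_fun_B1 by blast
qed

theorem mainTheorem6:
  fixes h :: nat
  assumes "0 < h"
  shows "let m = 100 * h - 1 in
    \<exists>i. 4 * i > 3 * (m + 1) \<and> i \<le> m \<and>
        (x0X_coeff m i :: ('k::field) fa) \<notin> B1 \<and>
        (\<forall>j. i < j \<and> j \<le> m \<longrightarrow> (x0X_coeff m j :: 'k fa) \<in> B1)"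
proof -
  define m where "m = 100 * h - 1"
  define P where "P i \<longleftrightarrow> i \<le> m \<and> (x0X_coeff m i :: 'k fa) \<notin> B1" for i
  obtain b where "b \<le> 2" "(x0X_coeff m (m - b * h) :: 'k fa) \<notin> B1"
    using x0X_coeff_notin_B1 [OF assms] unfolding m_def by blast
  then have witness: "P (m - b * h)"
    by (simp add: P_def)
  have "\<forall>i. P i \<longrightarrow> i \<le> m"
    by (simp add: P_def)
  then obtain i where i: "P i" "\<forall>j. P j \<longrightarrow> j \<le> i"
    using Nat.ex_has_greatest_nat [of P, OF witness] by blast
  have "b * h \<le> 2 * h"
    using \<open>b \<le> 2\<close> by (rule mult_le_mono1)
  moreover have "m + 1 = 100 * h"
    using assms by (simp add: m_def)
  moreover have "m - b * h \<le> i"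
    using i(2) witness by blast
  ultimately have "300 * h < 4 * i"
    using assms by linarith
  with \<open>m + 1 = 100 * h\<close> have "3 * (m + 1) < 4 * i"
    by simp
  moreover have "(x0X_coeff m j :: 'k fa) \<in> B1" if "i < j" "j \<le> m" for j
    using i(2) that by (auto simp: P_def)
  ultimately show ?thesis
    using i(1) unfolding Let_def m_def [symmetric] P_def by blast
qed

end
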